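(* Let $\mathcal{I}=\{(m,n)\in\mathbb{N}^2: m\le n\}$ and let $C=[0,1]^{\mathcal{I}}$ be the unit cube in the space $(\ell^\infty(\mathcal{I}),\|\cdot\|_\infty)$. Then there exist a non-expansive map $T:C\to C$ (i.e. $\|Tx-Ty\|_\infty\le\|x-y\|_\infty$ for all $x,y\in C$), points $x^0,y^0\in C$, and a sequence $(x^n)_{n\in\mathbb{N}}$ in $C$ satisfying, with the convention $Tx^{-1}=y^0$, $$x^n=\sum_{i=0}^n\pi^n_i\,Tx^{i-1}\quad\text{for all }n\ge1,$$ such that $\|x^m-x^n\|_\infty=d_{m,n}$ for all $m,n\in\mathbb{N}$. Moreover, if in addition condition (H) holds, then this sequence also satisfies $\|x^n-Tx^n\|_\infty=R_n:=\sum_{i=0}^n\pi^n_i\,d_{i-1,n}$ for all $n\in\mathbb{N}$.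
   Context: Let $\mathbb{N}=\{0,1,2,\dots\}$. Fix a sequence $(\pi^n)_{n\in\mathbb{N}}$ where each $\pi^n=(\pi^n_i)_{i\in\mathbb{N}}$ is a probability distribution on $\mathbb{N}$ with support contained in $\{0,\dots,n\}$, and $\pi^n\ne\pi^m$ for $m\ne n$. Define reals $d_{m,n}$ for $m,n\in\mathbb{N}\cup\{-1\}$ recursively as follows: $d_{-1,-1}=0$, $d_{-1,j}=d_{j,-1}=1$ for $j\in\mathbb{N}$, and for $m,n\in\mathbb{N}$, $$d_{m,n}=\min_{z\in\mathcal{F}_{m,n}}\sum_{i=0}^m\sum_{j=0}^n z_{i,j}\,d_{i-1,j-1},$$ where $\mathcal{F}_{m,n}$ is the set of arrays $z=(z_{i,j})_{0\le i\le m,\,0\le j\le n}$ with $z_{i,j}\ge0$, $\sum_{j=0}^n z_{i,j}=\pi^m_i$ for all $i\le m$, and $\sum_{i=0}^m z_{i,j}=\pi^n_j$ for all $j\le n$. Condition (H) means: for every $n\ge1$, $\pi^n_n>0$ and $0\le\pi^n_i\le\pi^{n-1}_i$ for all $i<n$. *)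

theory Defs
  imports "HOL-Analysis.Analysis"
begin

(* Probability distributions are functions  P n i  (= \<P>^n_i).  *)

definition plans :: "(nat \<Rightarrow> nat \<Rightarrow> real) \<Rightarrow> nat \<Rightarrow> nat \<Rightarrow> (nat \<Rightarrow> nat \<Rightarrow> real) set" where
  "plans P m n = {z. (\<forall>i\<le>m. \<forall>j\<le>n. 0 \<le> z i j)
                    \<and> (\<forall>i\<le>m. (\<Sum>j\<le>n. z i j) = P m i)
                    \<and> (\<forall>j\<le>n. (\<Sum>i\<le>m. z i j) = P n j)}"

(* Shifted distances: dd P a b = d_{a-1,b-1}. *)
function dd :: "(nat \<Rightarrow> nat \<Rightarrow> real) \<Rightarrow> nat \<Rightarrow> nat \<Rightarrow> real" where
  "dd P 0 0 = 0"
| "dd P 0 (Suc j) = 1"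
| "dd P (Suc j) 0 = 1"
| "dd P (Suc m) (Suc n) =
     Inf ((\<lambda>z. \<Sum>i\<le>m. \<Sum>j\<le>n. z i j * dd P i j) ` plans P m n)"
  by pat_completeness auto
termination
  apply (relation "Wellfounded.measure (\<lambda>(P,a,b). a+b)")
  apply auto
  done

(* d_{m,n} for m, n \<in> \<nat> \<union> {-1}, indexed by integers \<ge> -1. *)
definition d :: "(nat \<Rightarrow> nat \<Rightarrow> real) \<Rightarrow> int \<Rightarrow> int \<Rightarrow> real" where
  "d P m n = dd P (nat (m + 1)) (nat (n + 1))"

definition Iset :: "(nat \<times> nat) set" where
  "Iset = {(m,n). m \<le> n}"

definition cube :: "(nat \<times> nat \<Rightarrow> real) set" where
  "cube = {x. (\<forall>p\<in>Iset. 0 \<le> x p \<and> x p \<le> 1) \<and> (\<forall>p. p \<notin> Iset \<longrightarrow> x p = 0)}"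

definition linf_dist :: "(nat \<times> nat \<Rightarrow> real) \<Rightarrow> (nat \<times> nat \<Rightarrow> real) \<Rightarrow> real" where
  "linf_dist x y = (SUP p\<in>Iset. \<bar>x p - y p\<bar>)"

definition is_prob_seq :: "(nat \<Rightarrow> nat \<Rightarrow> real) \<Rightarrow> bool" where
  "is_prob_seq P \<longleftrightarrow> (\<forall>n. (\<forall>i. 0 \<le> P n i) \<and> (\<forall>i>n. P n i = 0) \<and> (\<Sum>i\<le>n. P n i) = 1)
                       \<and> (\<forall>m n. m \<noteq> n \<longrightarrow> P m \<noteq> P n)"

definition condH :: "(nat \<Rightarrow> nat \<Rightarrow> real) \<Rightarrow> bool" where
  "condH P \<longleftrightarrow> (\<forall>n\<ge>1. P n n > 0 \<and> (\<forall>i<n. 0 \<le> P n i \<and> P n i \<le> P (n - 1) i))"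

end

theory Submission
  imports Defs
begin

text \<open>For \<open>m < n\<close>, LP duality (Farkas' lemma, proved here by Fourier--Motzkin elimination)
  gives a Kantorovich potential \<open>f\<^sub>m\<^sub>n\<close>: a function on \<open>\<nat>\<close> with values in \<open>[0, 1]\<close>, with
  \<open>|f(k) - f(l)| \<le> d(k-1, l-1)\<close> and \<open>\<Sum>\<^sub>i \<pi>\<^sup>m\<^sub>i f(i) - \<Sum>\<^sub>j \<pi>\<^sup>n\<^sub>j f(j) \<ge> d(m, n)\<close>; on the diagonal
  take \<open>f\<^sub>n\<^sub>n(k) = 1 - d(k-1, n)\<close>. Let \<open>y\<^sup>k\<close> be the point with coordinates \<open>f\<^sub>m\<^sub>n(k)\<close> and
  \<open>x\<^sup>n = \<Sum>\<^sub>i \<pi>\<^sup>n\<^sub>i y\<^sup>i\<close>. Since \<open>d\<close> is a metric (the triangle inequality comes from gluing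
  couplings), averaging a \<open>1\<close>-Lipschitz function against \<open>\<pi>\<^sup>m\<close> and \<open>\<pi>\<^sup>n\<close> changes it by at most
  \<open>d(m, n)\<close>; hence \<open>\<parallel>x\<^sup>m - x\<^sup>n\<parallel> = d(m, n)\<close>, and the diagonal coordinates give
  \<open>\<parallel>x\<^sup>n - y\<^sup>n\<^sup>+\<^sup>1\<parallel> = R\<^sub>n\<close>. Finally \<open>T\<close> is the coordinatewise McShane extension of
  \<open>x\<^sup>n \<mapsto> y\<^sup>n\<^sup>+\<^sup>1\<close>: it is non-expansive and \<open>T x\<^sup>n = y\<^sup>n\<^sup>+\<^sup>1\<close>, which is the required recursion
  with \<open>y\<^sup>0\<close> as starting point.\<close>

section \<open>Farkas' lemma by Fourier--Motzkin elimination\<close>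

text \<open>A pair \<open>(a, b)\<close> stands for the linear inequality \<open>\<Sum>\<^sub>v a v * x v \<le> b\<close>.\<close>

inductive_set nonneg_combs :: "(('v \<Rightarrow> real) \<times> real) set \<Rightarrow> (('v \<Rightarrow> real) \<times> real) set"
  for C :: "(('v \<Rightarrow> real) \<times> real) set" where
  base: "c \<in> C \<Longrightarrow> c \<in> nonneg_combs C"
| add: "c \<in> nonneg_combs C \<Longrightarrow> e \<in> nonneg_combs C
    \<Longrightarrow> (\<lambda>v. fst c v + fst e v, snd c + snd e) \<in> nonneg_combs C"
| scale: "c \<in> nonneg_combs C \<Longrightarrow> 0 \<le> t \<Longrightarrow> (\<lambda>v. t * fst c v, t * snd c) \<in> nonneg_combs C"

lemma nonneg_combs_subset: "C' \<subseteq> nonneg_combs C \<Longrightarrow> nonneg_combs C' \<subseteq> nonneg_combs C"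
proof
  fix c assume "C' \<subseteq> nonneg_combs C" "c \<in> nonneg_combs C'"
  then show "c \<in> nonneg_combs C"
    by (induction rule: nonneg_combs.induct[OF \<open>c \<in> nonneg_combs C'\<close>])
      (auto intro: nonneg_combs.intros)
qed

definition fm_combine :: "'v \<Rightarrow> ('v \<Rightarrow> real) \<times> real \<Rightarrow> ('v \<Rightarrow> real) \<times> real \<Rightarrow> ('v \<Rightarrow> real) \<times> real" where
  "fm_combine w c e =
     (\<lambda>v. - fst e w * fst c v + fst c w * fst e v, - fst e w * snd c + fst c w * snd e)"

definition fm_eliminate :: "'v \<Rightarrow> (('v \<Rightarrow> real) \<times> real) set \<Rightarrow> (('v \<Rightarrow> real) \<times> real) set" where
  "fm_eliminate w C = {c \<in> C. fst c w = 0}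
     \<union> (\<lambda>(c, e). fm_combine w c e) ` ({c \<in> C. 0 < fst c w} \<times> {e \<in> C. fst e w < 0})"

lemma finite_fm_eliminate: "finite C \<Longrightarrow> finite (fm_eliminate w C)"
  by (simp add: fm_eliminate_def)

lemma fm_eliminate_vanishes:
  assumes "c \<in> fm_eliminate w C" "v = w \<or> (\<forall>e\<in>C. fst e v = 0)"
  shows "fst c v = 0"
proof -
  from assms(1) consider "c \<in> C" "fst c w = 0" | p n where "p \<in> C" "n \<in> C" "c = fm_combine w p n"
    by (auto simp: fm_eliminate_def)
  then show ?thesis
  proof cases
    case 2
    then have "v = w \<or> fst p v = 0 \<and> fst n v = 0" using assms(2) by blast
    then show ?thesis using 2 by (auto simp: fm_combine_def)
  qed (use assms(2) in auto)
qed

lemma fm_eliminate_subset: "fm_eliminate w C \<subseteq> nonneg_combs C"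
proof
  fix c assume "c \<in> fm_eliminate w C"
  then consider "c \<in> C"
    | p n where "p \<in> C" "0 < fst p w" "n \<in> C" "fst n w < 0" "c = fm_combine w p n"
    by (auto simp: fm_eliminate_def)
  then show "c \<in> nonneg_combs C"
  proof cases
    case 2
    have "0 \<le> - fst n w" "0 \<le> fst p w" using 2 by simp_all
    from nonneg_combs.add[OF nonneg_combs.scale[OF nonneg_combs.base[OF \<open>p \<in> C\<close>] this(1)]
        nonneg_combs.scale[OF nonneg_combs.base[OF \<open>n \<in> C\<close>] this(2)]]
    show ?thesis
      using 2 by (simp add: fm_combine_def)
  qed (rule nonneg_combs.base)
qed

lemma ex_between_finite:
  fixes f g :: "'a \<Rightarrow> real"
  assumes "finite A" "finite B" "\<And>a b. a \<in> A \<Longrightarrow> b \<in> B \<Longrightarrow> f a \<le> g b"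
  shows "\<exists>t. (\<forall>a\<in>A. f a \<le> t) \<and> (\<forall>b\<in>B. t \<le> g b)"
proof
  let ?t = "if A = {} then (if B = {} then 0 else Min (g ` B)) else Max (f ` A)"
  show "(\<forall>a\<in>A. f a \<le> ?t) \<and> (\<forall>b\<in>B. ?t \<le> g b)"
    using assms by (auto simp: Max_le_iff)
qed

text \<open>The eliminated variable is given a value between the bounds imposed on it by the
  inequalities with negative and with positive coefficient; the eliminated system says
  precisely that these bounds are compatible.\<close>

lemma fm_eliminate_solution_extends:
  assumes "finite C" "finite V" "w \<notin> V"
    and sol: "\<forall>c\<in>fm_eliminate w C. (\<Sum>v\<in>V. fst c v * x v) \<le> snd c"
  shows "\<exists>x'. \<forall>c\<in>C. (\<Sum>v\<in>insert w V. fst c v * x' v) \<le> snd c"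
proof -
  define Pos where "Pos = {c \<in> C. 0 < fst c w}"
  define Neg where "Neg = {c \<in> C. fst c w < 0}"
  define bound where "bound c = (snd c - (\<Sum>v\<in>V. fst c v * x v)) / fst c w" for c
  have bound_le: "bound e \<le> bound c" if c: "c \<in> Pos" and e: "e \<in> Neg" for c e
  proof -
    have "fm_combine w c e \<in> fm_eliminate w C"
      using c e by (auto simp: fm_eliminate_def Pos_def Neg_def)
    with sol have "(\<Sum>v\<in>V. fst (fm_combine w c e) v * x v) \<le> snd (fm_combine w c e)"
      by blast
    then have "(snd c - (\<Sum>v\<in>V. fst c v * x v)) * fst e w \<le> (snd e - (\<Sum>v\<in>V. fst e v * x v)) * fst c w"
      by (simp add: fm_combine_def sum_subtractf sum_distrib_left algebra_simps)
    moreover have "0 < fst c w" "fst e w < 0" using c e by (auto simp: Pos_def Neg_def)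
    ultimately show ?thesis
      by (simp add: bound_def divide_simps mult.commute)
  qed
  have "finite Neg" "finite Pos" using assms(1) by (simp_all add: Pos_def Neg_def)
  with bound_le obtain t where le_t: "\<forall>e\<in>Neg. bound e \<le> t" and t_le: "\<forall>c\<in>Pos. t \<le> bound c"
    using ex_between_finite[of Neg Pos bound bound] by blast
  have extend: "(\<Sum>v\<in>insert w V. a v * (x(w := t)) v) = a w * t + (\<Sum>v\<in>V. a v * x v)" for a
    using assms(2,3) by (auto intro!: sum.cong)
  have "(\<Sum>v\<in>insert w V. fst c v * (x(w := t)) v) \<le> snd c" if "c \<in> C" for c
  proof (cases "fst c w" "0 :: real" rule: linorder_cases)
    case equal
    then have "c \<in> fm_eliminate w C" using that by (simp add: fm_eliminate_def)
    then show ?thesis using sol equal unfolding extend by simp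
  next
    case greater
    then have "c \<in> Pos" using that by (simp add: Pos_def)
    then have "fst c w * t \<le> fst c w * bound c" using t_le greater by simp
    then show ?thesis using greater unfolding extend by (simp add: bound_def)
  next
    case less
    then have "c \<in> Neg" using that by (simp add: Neg_def)
    then have "fst c w * t \<le> fst c w * bound c" using le_t less by (simp add: mult_le_cancel_left)
    then show ?thesis using less unfolding extend by (simp add: bound_def)
  qed
  then show ?thesis by blast
qed

lemma infeasible_imp_negative_comb:
  assumes "finite V" "finite C" "\<forall>c\<in>C. \<forall>v. v \<notin> V \<longrightarrow> fst c v = 0"
    and "\<forall>x. \<exists>c\<in>C. snd c < (\<Sum>v\<in>V. fst c v * x v)"
  shows "\<exists>b<0. (\<lambda>_. 0, b) \<in> nonneg_combs C"
  using assms
proof (induction V arbitrary: C rule: finite_induct)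
  case empty
  then obtain c where c: "c \<in> C" "snd c < 0" by auto
  moreover have "fst c = (\<lambda>_. 0)" using empty.prems(2) c(1) by (simp add: fun_eq_iff)
  ultimately have "(\<lambda>_. 0, snd c) \<in> nonneg_combs C" by (cases c) (simp add: nonneg_combs.base)
  with c(2) show ?case by blast
next
  case (insert w V)
  have vanishes: "\<forall>c\<in>fm_eliminate w C. \<forall>v. v \<notin> V \<longrightarrow> fst c v = 0"
  proof (intro ballI allI impI)
    fix c v assume c: "c \<in> fm_eliminate w C" and "v \<notin> V"
    then have "v = w \<or> (\<forall>e\<in>C. fst e v = 0)" using insert.prems(2) by auto
    with c show "fst c v = 0" by (rule fm_eliminate_vanishes)
  qed
  have infeasible: "\<forall>x. \<exists>c\<in>fm_eliminate w C. snd c < (\<Sum>v\<in>V. fst c v * x v)"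
  proof (rule allI, rule ccontr)
    fix x
    assume "\<not> (\<exists>c\<in>fm_eliminate w C. snd c < (\<Sum>v\<in>V. fst c v * x v))"
    then have "\<forall>c\<in>fm_eliminate w C. (\<Sum>v\<in>V. fst c v * x v) \<le> snd c" by (simp add: not_less)
    from fm_eliminate_solution_extends[OF insert.prems(1) insert.hyps(1,2) this]
    obtain x' where x': "\<forall>c\<in>C. (\<Sum>v\<in>insert w V. fst c v * x' v) \<le> snd c" by blast
    from insert.prems(3) obtain c where "c \<in> C" "snd c < (\<Sum>v\<in>insert w V. fst c v * x' v)"
      by blast
    moreover from x' \<open>c \<in> C\<close> have "(\<Sum>v\<in>insert w V. fst c v * x' v) \<le> snd c" by blast
    ultimately show False by linarith
  qed
  obtain b where b: "b < 0" "(\<lambda>_. 0, b) \<in> nonneg_combs (fm_eliminate w C)"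
    using insert.IH[OF finite_fm_eliminate[OF insert.prems(1)] vanishes infeasible] by blast
  have "(\<lambda>_. 0, b) \<in> nonneg_combs C"
    using subsetD[OF nonneg_combs_subset[OF fm_eliminate_subset] b(2)] .
  with b(1) show ?case by blast
qed

lemma nonneg_combs_weights:
  assumes "finite K" "c \<in> nonneg_combs ((\<lambda>k. (a k, b k)) ` K)"
  shows "\<exists>\<mu>. (\<forall>k\<in>K. 0 \<le> \<mu> k) \<and> fst c = (\<lambda>v. \<Sum>k\<in>K. \<mu> k * a k v) \<and> snd c = (\<Sum>k\<in>K. \<mu> k * b k)"
  using assms(2)
proof induction
  case (base c)
  then obtain k0 where "k0 \<in> K" "c = (a k0, b k0)" by auto
  moreover have "(\<Sum>k\<in>K. (if k = k0 then 1 else 0) * f k) = f k0" for f :: "'a \<Rightarrow> real"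
    using \<open>k0 \<in> K\<close> assms(1) by (simp add: if_distrib[of "\<lambda>r. r * _"] cong: if_cong)
  ultimately show ?case
    by (intro exI[of _ "\<lambda>k. if k = k0 then 1 else 0"]) simp
next
  case (add c e)
  then obtain \<mu> \<nu> where "\<forall>k\<in>K. 0 \<le> \<mu> k" "fst c = (\<lambda>v. \<Sum>k\<in>K. \<mu> k * a k v)" "snd c = (\<Sum>k\<in>K. \<mu> k * b k)"
    "\<forall>k\<in>K. 0 \<le> \<nu> k" "fst e = (\<lambda>v. \<Sum>k\<in>K. \<nu> k * a k v)" "snd e = (\<Sum>k\<in>K. \<nu> k * b k)"
    by blast
  then show ?case
    by (intro exI[of _ "\<lambda>k. \<mu> k + \<nu> k"]) (simp add: distrib_right sum.distrib)
next
  case (scale c t)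
  then obtain \<mu> where "\<forall>k\<in>K. 0 \<le> \<mu> k" "fst c = (\<lambda>v. \<Sum>k\<in>K. \<mu> k * a k v)" "snd c = (\<Sum>k\<in>K. \<mu> k * b k)"
    by blast
  then show ?case
    using scale.hyps(2) by (intro exI[of _ "\<lambda>k. t * \<mu> k"]) (simp add: sum_distrib_left mult.assoc)
qed

lemma farkas_lemma:
  fixes a :: "'k \<Rightarrow> 'v \<Rightarrow> real" and b :: "'k \<Rightarrow> real"
  assumes "finite V" "finite K"
    and infeasible: "\<forall>x. \<exists>k\<in>K. b k < (\<Sum>v\<in>V. a k v * x v)"
  shows "\<exists>\<mu>. (\<forall>k\<in>K. 0 \<le> \<mu> k) \<and> (\<forall>v\<in>V. (\<Sum>k\<in>K. \<mu> k * a k v) = 0) \<and> (\<Sum>k\<in>K. \<mu> k * b k) < 0"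
proof -
  define a' where "a' k v = (if v \<in> V then a k v else 0)" for k v
  have "(\<Sum>v\<in>V. a' k v * x v) = (\<Sum>v\<in>V. a k v * x v)" for k x
    by (simp add: a'_def)
  then have infeasible': "\<forall>x. \<exists>c\<in>(\<lambda>k. (a' k, b k)) ` K. snd c < (\<Sum>v\<in>V. fst c v * x v)"
    using infeasible by simp
  have "\<forall>c\<in>(\<lambda>k. (a' k, b k)) ` K. \<forall>v. v \<notin> V \<longrightarrow> fst c v = 0"
    by (auto simp: a'_def)
  from infeasible_imp_negative_comb[OF assms(1) finite_imageI[OF assms(2)] this infeasible']
  obtain b0 where b0: "b0 < 0" "(\<lambda>_. 0, b0) \<in> nonneg_combs ((\<lambda>k. (a' k, b k)) ` K)"
    by blast
  from nonneg_combs_weights[OF assms(2) b0(2)] obtain \<mu> where "\<forall>k\<in>K. 0 \<le> \<mu> k"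
    and balance: "(\<lambda>_. 0) = (\<lambda>v. \<Sum>k\<in>K. \<mu> k * a' k v)" and "b0 = (\<Sum>k\<in>K. \<mu> k * b k)"
    by auto
  moreover have "(\<Sum>k\<in>K. \<mu> k * a k v) = 0" if "v \<in> V" for v
    using fun_cong[OF balance, of v] that by (simp add: a'_def)
  ultimately show ?thesis
    using b0(1) by blast
qed

section \<open>The sup-distance on the cube and McShane extensions\<close>

lemma Iset_nonempty: "Iset \<noteq> {}"
  by (auto simp: Iset_def)

lemma abs_le_linf_dist:
  assumes "u \<in> cube" "v \<in> cube" "p \<in> Iset"
  shows "\<bar>u p - v p\<bar> \<le> linf_dist u v"
  unfolding linf_dist_def
proof (rule cSUP_upper[OF assms(3)])
  have "\<bar>u q - v q\<bar> \<le> 1" if "q \<in> Iset" for q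
    using assms(1,2) that by (auto simp: cube_def abs_le_iff) fastforce+
  then show "bdd_above ((\<lambda>q. \<bar>u q - v q\<bar>) ` Iset)" by (intro bdd_aboveI2)
qed

lemma linf_dist_le: "(\<And>p. p \<in> Iset \<Longrightarrow> \<bar>u p - v p\<bar> \<le> r) \<Longrightarrow> linf_dist u v \<le> r"
  unfolding linf_dist_def using Iset_nonempty by (rule cSUP_least)

lemma linf_dist_nonneg: "u \<in> cube \<Longrightarrow> v \<in> cube \<Longrightarrow> 0 \<le> linf_dist u v"
  using abs_le_linf_dist[of u v "(0, 0)"] by (simp add: Iset_def)

lemma linf_dist_self: "linf_dist u u = 0"
  using Iset_nonempty by (simp add: linf_dist_def)

lemma linf_dist_commute: "linf_dist u v = linf_dist v u"
  unfolding linf_dist_def by (simp add: abs_minus_commute)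

lemma linf_dist_triangle:
  assumes "u \<in> cube" "v \<in> cube" "w \<in> cube"
  shows "linf_dist u w \<le> linf_dist u v + linf_dist v w"
proof (rule linf_dist_le)
  fix p assume "p \<in> Iset"
  have "\<bar>u p - w p\<bar> \<le> \<bar>u p - v p\<bar> + \<bar>v p - w p\<bar>" by simp
  also have "\<dots> \<le> linf_dist u v + linf_dist v w"
    using abs_le_linf_dist[OF _ _ \<open>p \<in> Iset\<close>] assms by (intro add_mono) auto
  finally show "\<bar>u p - w p\<bar> \<le> linf_dist u v + linf_dist v w" .
qed

definition mcshane :: "(nat \<Rightarrow> nat \<times> nat \<Rightarrow> real) \<Rightarrow> (nat \<Rightarrow> real) \<Rightarrow> (nat \<times> nat \<Rightarrow> real) \<Rightarrow> real" where
  "mcshane a b u = (INF n. b n + linf_dist u (a n))"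

context
  fixes a :: "nat \<Rightarrow> nat \<times> nat \<Rightarrow> real" and b :: "nat \<Rightarrow> real"
  assumes a_in_cube: "\<And>n. a n \<in> cube" and b_nonneg: "\<And>n. 0 \<le> b n"
begin

lemma mcshane_le: "u \<in> cube \<Longrightarrow> mcshane a b u \<le> b n + linf_dist u (a n)"
  unfolding mcshane_def
  by (rule cINF_lower) (auto intro!: bdd_belowI2 add_nonneg_nonneg b_nonneg linf_dist_nonneg a_in_cube)

lemma mcshane_diff_le:
  assumes "u \<in> cube" "v \<in> cube"
  shows "mcshane a b u - mcshane a b v \<le> linf_dist u v"
proof -
  have "mcshane a b u - linf_dist u v \<le> b n + linf_dist v (a n)" for n
    using mcshane_le[OF assms(1), of n] linf_dist_triangle[OF assms a_in_cube, of n] by simp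
  then have "mcshane a b u - linf_dist u v \<le> mcshane a b v"
    unfolding mcshane_def[of _ _ v] by (intro cINF_greatest) auto
  then show ?thesis by simp
qed

lemma abs_mcshane_diff_le: "u \<in> cube \<Longrightarrow> v \<in> cube \<Longrightarrow> \<bar>mcshane a b u - mcshane a b v\<bar> \<le> linf_dist u v"
  using mcshane_diff_le[of u v] mcshane_diff_le[of v u] by (simp add: abs_le_iff linf_dist_commute)

lemma mcshane_at:
  assumes "\<And>n. b k \<le> b n + linf_dist (a k) (a n)"
  shows "mcshane a b (a k) = b k"
proof (rule antisym)
  show "mcshane a b (a k) \<le> b k"
    using mcshane_le[OF a_in_cube, of k k] by (simp add: linf_dist_self)
  show "b k \<le> mcshane a b (a k)"
    unfolding mcshane_def using assms by (intro cINF_greatest) auto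
qed

end

lemma abs_clamp_diff_le: "\<bar>max 0 (min 1 x) - max 0 (min 1 y)\<bar> \<le> \<bar>x - y :: real\<bar>"
  by (simp add: abs_le_iff max_def min_def) linarith

section \<open>The transport distance\<close>

declare dd.simps(4) [simp del]

lemma nat_pair_induct [case_names zero_zero zero_Suc Suc_zero Suc_Suc]:
  fixes Q :: "nat \<Rightarrow> nat \<Rightarrow> bool"
  assumes "Q 0 0" "\<And>j. Q 0 (Suc j)" "\<And>j. Q (Suc j) 0"
    and "\<And>m n. (\<And>i j. i \<le> m \<Longrightarrow> j \<le> n \<Longrightarrow> Q i j) \<Longrightarrow> Q (Suc m) (Suc n)"
  shows "Q a b"
proof (induction "a + b" arbitrary: a b rule: less_induct)
  case less
  show ?case
  proof (cases a; cases b)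
    fix m n assume "a = Suc m" "b = Suc n"
    then show ?thesis using less by (auto intro!: assms(4))
  qed (use assms in auto)
qed

locale prob_seq =
  fixes P :: "nat \<Rightarrow> nat \<Rightarrow> real"
  assumes is_prob_seq: "is_prob_seq P"
begin

lemma P_nonneg: "0 \<le> P n i"
  using is_prob_seq by (simp add: is_prob_seq_def)

lemma sum_P: "(\<Sum>i\<le>n. P n i) = 1"
  using is_prob_seq by (simp add: is_prob_seq_def)

definition cost :: "nat \<Rightarrow> nat \<Rightarrow> (nat \<Rightarrow> nat \<Rightarrow> real) \<Rightarrow> real" where
  "cost m n z = (\<Sum>i\<le>m. \<Sum>j\<le>n. z i j * dd P i j)"

lemma dd_Suc_Suc: "dd P (Suc m) (Suc n) = (INF z\<in>plans P m n. cost m n z)"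
  by (simp add: dd.simps(4) cost_def)

lemma product_plan: "(\<lambda>i j. P m i * P n j) \<in> plans P m n"
  by (simp add: plans_def P_nonneg sum_P flip: sum_distrib_left sum_distrib_right)

lemma plans_nonempty: "plans P m n \<noteq> {}"
  using product_plan by blast

lemma plans_transpose: "plans P m n = (\<lambda>z i j. z j i) ` plans P n m"
proof -
  have "(\<lambda>z i j. z j i) ` plans P n m \<subseteq> plans P m n" for m n
    by (auto simp: plans_def)
  from this[of n m] this[of m n] show ?thesis
    by (auto simp: image_image intro: image_eqI[where x = "\<lambda>i j. _ j i"])
qed

lemma plan_eq_0:
  assumes "z \<in> plans P m n" "i \<le> m" "j \<le> n" "P m i = 0 \<or> P n j = 0"
  shows "z i j = 0"
proof -
  have nonneg: "\<forall>i\<le>m. \<forall>j\<le>n. 0 \<le> z i j" using assms(1) by (simp add: plans_def)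
  consider "(\<Sum>j'\<le>n. z i j') = 0" | "(\<Sum>i'\<le>m. z i' j) = 0"
    using assms by (auto simp: plans_def)
  then show ?thesis
  proof cases
    case 1
    with nonneg assms(2) have "\<forall>j'\<in>{..n}. z i j' = 0" by (subst (asm) sum_nonneg_eq_0_iff) auto
    then show ?thesis using assms(3) by simp
  next
    case 2
    with nonneg assms(3) have "\<forall>i'\<in>{..m}. z i' j = 0" by (subst (asm) sum_nonneg_eq_0_iff) auto
    then show ?thesis using assms(2) by simp
  qed
qed

lemma dd_nonneg: "0 \<le> dd P a b"
proof (induction a b rule: nat_pair_induct)
  case (Suc_Suc m n)
  then have "0 \<le> cost m n z" if "z \<in> plans P m n" for z
    using that by (auto simp: cost_def plans_def intro!: sum_nonneg)
  then show ?case by (simp add: dd_Suc_Suc plans_nonempty cINF_greatest)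
qed simp_all

lemma cost_nonneg: "z \<in> plans P m n \<Longrightarrow> 0 \<le> cost m n z"
  by (auto simp: cost_def plans_def dd_nonneg intro!: sum_nonneg)

lemma dd_Suc_Suc_le_cost: "z \<in> plans P m n \<Longrightarrow> dd P (Suc m) (Suc n) \<le> cost m n z"
  unfolding dd_Suc_Suc by (rule cINF_lower) (auto intro: bdd_belowI2 cost_nonneg)

lemma le_dd_Suc_SucI: "(\<And>z. z \<in> plans P m n \<Longrightarrow> r \<le> cost m n z) \<Longrightarrow> r \<le> dd P (Suc m) (Suc n)"
  unfolding dd_Suc_Suc using plans_nonempty by (rule cINF_greatest)

lemma dd_le_1: "dd P a b \<le> 1"
proof (induction a b rule: nat_pair_induct)
  case (Suc_Suc m n)
  have "cost m n (\<lambda>i j. P m i * P n j) \<le> (\<Sum>i\<le>m. \<Sum>j\<le>n. P m i * P n j * 1)"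
    unfolding cost_def using Suc_Suc by (intro sum_mono mult_left_mono) (auto simp: P_nonneg)
  also have "\<dots> = 1" by (simp add: sum_P flip: sum_distrib_left sum_distrib_right)
  finally show ?case using dd_Suc_Suc_le_cost[OF product_plan] by (rule order_trans[rotated])
qed simp_all

lemma dd_self: "dd P a a = 0"
proof (induction a rule: less_induct)
  case (less a)
  show ?case
  proof (cases a)
    case (Suc m)
    have diagonal: "(\<lambda>i j. if i = j then P m i else 0) \<in> plans P m m"
      by (auto simp: plans_def P_nonneg if_distrib cong: if_cong)
    have "cost m m (\<lambda>i j. if i = j then P m i else 0) = 0"
      using less Suc by (simp add: cost_def if_distrib[of "\<lambda>r. r * _"] cong: if_cong)
    then show ?thesis
      using dd_Suc_Suc_le_cost[OF diagonal] dd_nonneg[of a a] Suc by simp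
  qed simp
qed

lemma dd_sym: "dd P a b = dd P b a"
proof (induction a b rule: nat_pair_induct)
  case (Suc_Suc m n)
  have "cost m n (\<lambda>i j. z j i) = cost n m z" for z
  proof -
    have "cost m n (\<lambda>i j. z j i) = (\<Sum>i\<le>m. \<Sum>j\<le>n. z j i * dd P j i)"
      unfolding cost_def using Suc_Suc by (intro sum.cong refl) auto
    also have "\<dots> = cost n m z" unfolding cost_def by (rule sum.swap)
    finally show ?thesis .
  qed
  then show ?case
    by (simp add: dd_Suc_Suc plans_transpose[of m n] image_image)
qed simp_all

text \<open>Gluing two couplings along their common marginal \<open>\<pi>\<^sup>k\<close>: the middle index is chosen
  with law \<open>\<pi>\<^sup>k\<close>, and the outer ones conditionally independently given it.\<close>

definition glue :: "nat \<Rightarrow> (nat \<Rightarrow> nat \<Rightarrow> real) \<Rightarrow> (nat \<Rightarrow> nat \<Rightarrow> real) \<Rightarrow> nat \<Rightarrow> nat \<Rightarrow> nat \<Rightarrow> real" where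
  "glue k z1 z2 i j l = (if P k j = 0 then 0 else z1 i j * z2 j l / P k j)"

context
  fixes m k n :: nat and z1 z2 :: "nat \<Rightarrow> nat \<Rightarrow> real"
  assumes z1: "z1 \<in> plans P m k" and z2: "z2 \<in> plans P k n"
begin

lemma glue_nonneg: "i \<le> m \<Longrightarrow> j \<le> k \<Longrightarrow> l \<le> n \<Longrightarrow> 0 \<le> glue k z1 z2 i j l"
  using z1 z2 P_nonneg[of k j] by (simp add: glue_def plans_def)

lemma sum_glue_right:
  assumes "i \<le> m" "j \<le> k"
  shows "(\<Sum>l\<le>n. glue k z1 z2 i j l) = z1 i j"
proof (cases "P k j = 0")
  case True
  then show ?thesis using plan_eq_0[OF z1 assms] by (simp add: glue_def)
next
  case False
  moreover have "(\<Sum>l\<le>n. z2 j l) = P k j" using z2 assms(2) by (simp add: plans_def)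
  ultimately show ?thesis by (simp add: glue_def flip: sum_divide_distrib sum_distrib_left)
qed

lemma sum_glue_left:
  assumes "j \<le> k" "l \<le> n"
  shows "(\<Sum>i\<le>m. glue k z1 z2 i j l) = z2 j l"
proof (cases "P k j = 0")
  case True
  then show ?thesis using plan_eq_0[OF z2 assms] by (simp add: glue_def)
next
  case False
  moreover have "(\<Sum>i\<le>m. z1 i j) = P k j" using z1 assms(1) by (simp add: plans_def)
  ultimately show ?thesis by (simp add: glue_def flip: sum_divide_distrib sum_distrib_right)
qed

lemma glued_plan: "(\<lambda>i l. \<Sum>j\<le>k. glue k z1 z2 i j l) \<in> plans P m n"
proof -
  have "(\<Sum>l\<le>n. \<Sum>j\<le>k. glue k z1 z2 i j l) = P m i" if "i \<le> m" for i
    using z1 that by (subst sum.swap) (simp add: sum_glue_right plans_def)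
  moreover have "(\<Sum>i\<le>m. \<Sum>j\<le>k. glue k z1 z2 i j l) = P n l" if "l \<le> n" for l
    using z2 that by (subst sum.swap) (simp add: sum_glue_left plans_def)
  ultimately show ?thesis by (auto simp: plans_def glue_nonneg intro!: sum_nonneg)
qed

lemma dd_Suc_Suc_le_glued_cost:
  assumes triangle: "\<And>i j l. i \<le> m \<Longrightarrow> j \<le> k \<Longrightarrow> l \<le> n \<Longrightarrow> dd P i l \<le> dd P i j + dd P j l"
  shows "dd P (Suc m) (Suc n) \<le> cost m k z1 + cost k n z2"
proof -
  let ?g = "glue k z1 z2"
  have "dd P (Suc m) (Suc n) \<le> (\<Sum>i\<le>m. \<Sum>l\<le>n. (\<Sum>j\<le>k. ?g i j l) * dd P i l)"
    using dd_Suc_Suc_le_cost[OF glued_plan] by (simp add: cost_def)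
  also have "\<dots> = (\<Sum>i\<le>m. \<Sum>j\<le>k. \<Sum>l\<le>n. ?g i j l * dd P i l)"
    by (simp add: sum_distrib_right sum.swap[where A = "{..n}"])
  also have "\<dots> \<le> (\<Sum>i\<le>m. \<Sum>j\<le>k. \<Sum>l\<le>n. ?g i j l * dd P i j + ?g i j l * dd P j l)"
    by (intro sum_mono) (auto simp flip: distrib_left intro!: mult_left_mono triangle glue_nonneg)
  also have "\<dots> = (\<Sum>i\<le>m. \<Sum>j\<le>k. (\<Sum>l\<le>n. ?g i j l) * dd P i j)
      + (\<Sum>j\<le>k. \<Sum>l\<le>n. (\<Sum>i\<le>m. ?g i j l) * dd P j l)"
    by (simp add: sum.distrib sum_distrib_right sum.swap[where A = "{..m}"] sum.swap[where B = "{..n}"])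
  also have "\<dots> = cost m k z1 + cost k n z2"
    by (simp add: cost_def sum_glue_right sum_glue_left)
  finally show ?thesis .
qed

end

lemma dd_triangle: "dd P a c \<le> dd P a b + dd P b c"
proof (induction "a + b + c" arbitrary: a b c rule: less_induct)
  case less
  show ?case
  proof (cases "a = 0 \<or> b = 0 \<or> c = 0")
    case True
    then show ?thesis
      using dd_nonneg[of a b] dd_nonneg[of b c] dd_le_1[of a c] by (cases a; cases b; cases c) auto
  next
    case False
    then obtain m k n where abc: "a = Suc m" "b = Suc k" "c = Suc n" by (meson not0_implies_Suc)
    have "dd P (Suc m) (Suc n) - cost k n z2 \<le> dd P (Suc m) (Suc k)" if z2: "z2 \<in> plans P k n" for z2
    proof (rule le_dd_Suc_SucI)
      fix z1 assume "z1 \<in> plans P m k"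
      from dd_Suc_Suc_le_glued_cost[OF this z2] less abc
      show "dd P (Suc m) (Suc n) - cost k n z2 \<le> cost m k z1" by fastforce
    qed
    then have "dd P (Suc m) (Suc n) - dd P (Suc m) (Suc k) \<le> dd P (Suc k) (Suc n)"
      by (intro le_dd_Suc_SucI) (simp add: algebra_simps)
    then show ?thesis using abc by simp
  qed
qed

section \<open>Kantorovich duality\<close>

lemma scaled_plan_cost_ge:
  assumes nonneg: "\<forall>i\<le>m. \<forall>j\<le>n. 0 \<le> z i j" and "0 \<le> t"
    and rows: "\<forall>i\<le>m. (\<Sum>j\<le>n. z i j) = t * P m i"
    and cols: "\<forall>j\<le>n. (\<Sum>i\<le>m. z i j) = t * P n j"
  shows "t * dd P (Suc m) (Suc n) \<le> cost m n z"
proof (cases "t = 0")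
  case True
  have "z i j = 0" if "i \<le> m" "j \<le> n" for i j
  proof -
    have "\<forall>j'\<in>{..n}. z i j' = 0"
      using rows nonneg that True by (subst sum_nonneg_eq_0_iff[symmetric]) auto
    then show ?thesis using that by simp
  qed
  then show ?thesis using True by (simp add: cost_def)
next
  case False
  with \<open>0 \<le> t\<close> have "0 < t" by simp
  with nonneg rows cols have "(\<lambda>i j. z i j / t) \<in> plans P m n"
    by (simp add: plans_def flip: sum_divide_distrib)
  from dd_Suc_Suc_le_cost[OF this] have "dd P (Suc m) (Suc n) \<le> cost m n z / t"
    by (simp add: cost_def sum_divide_distrib)
  with \<open>0 < t\<close> show ?thesis by (simp add: field_simps)
qed

text \<open>The dual program as a system of inequalities in \<open>x :: nat + nat \<Rightarrow> real\<close>, with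
  \<open>u i = x (Inl i)\<close> and \<open>v j = x (Inr j)\<close>: index \<open>Some (i, j)\<close> is the constraint
  \<open>u i - v j \<le> dd P i j\<close> and index \<open>None\<close> says that the dual objective is at least
  \<open>dd P (Suc m) (Suc n)\<close>.\<close>

definition dual_index :: "nat \<Rightarrow> nat \<Rightarrow> (nat \<times> nat) option set" where
  "dual_index m n = insert None (Some ` ({..m} \<times> {..n}))"

definition dual_coeff :: "nat \<Rightarrow> nat \<Rightarrow> (nat \<times> nat) option \<Rightarrow> nat + nat \<Rightarrow> real" where
  "dual_coeff m n k = (case k of
      None \<Rightarrow> case_sum (\<lambda>i. - P m i) (\<lambda>j. P n j)
    | Some (i, j) \<Rightarrow> case_sum (\<lambda>i'. if i' = i then 1 else 0) (\<lambda>j'. if j' = j then -1 else 0))"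

definition dual_bound :: "nat \<Rightarrow> nat \<Rightarrow> (nat \<times> nat) option \<Rightarrow> real" where
  "dual_bound m n k = (case k of None \<Rightarrow> - dd P (Suc m) (Suc n) | Some (i, j) \<Rightarrow> dd P i j)"

lemma finite_dual_index: "finite (dual_index m n)"
  by (simp add: dual_index_def)

lemma sum_dual_index:
  "(\<Sum>k\<in>dual_index m n. f k) = f None + (\<Sum>i\<le>m. \<Sum>j\<le>n. f (Some (i, j)))"
  by (simp add: dual_index_def sum.reindex sum.cartesian_product)

lemma dual_solution:
  assumes feasible: "\<forall>k\<in>dual_index m n. (\<Sum>v\<in>{..m} <+> {..n}. dual_coeff m n k v * x v) \<le> dual_bound m n k"
  shows "(\<forall>i\<le>m. \<forall>j\<le>n. x (Inl i) - x (Inr j) \<le> dd P i j)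
    \<and> dd P (Suc m) (Suc n) \<le> (\<Sum>i\<le>m. P m i * x (Inl i)) - (\<Sum>j\<le>n. P n j * x (Inr j))"
proof (intro conjI allI impI)
  have sum_Plus: "(\<Sum>v\<in>{..m} <+> {..n}. g v) = (\<Sum>i\<le>m. g (Inl i)) + (\<Sum>j\<le>n. g (Inr j))"
    for g :: "nat + nat \<Rightarrow> real"
    by (simp add: sum.Plus comp_def)
  fix i j assume "i \<le> m" "j \<le> n"
  then have "Some (i, j) \<in> dual_index m n" by (simp add: dual_index_def)
  moreover have "(\<Sum>v\<in>{..m} <+> {..n}. dual_coeff m n (Some (i, j)) v * x v) = x (Inl i) - x (Inr j)"
    using \<open>i \<le> m\<close> \<open>j \<le> n\<close>
    by (simp add: sum_Plus dual_coeff_def if_distrib[of "\<lambda>r. r * _"] cong: if_cong)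
  ultimately show "x (Inl i) - x (Inr j) \<le> dd P i j"
    using feasible by (fastforce simp: dual_bound_def)
next
  have sum_Plus: "(\<Sum>v\<in>{..m} <+> {..n}. g v) = (\<Sum>i\<le>m. g (Inl i)) + (\<Sum>j\<le>n. g (Inr j))"
    for g :: "nat + nat \<Rightarrow> real"
    by (simp add: sum.Plus comp_def)
  have "None \<in> dual_index m n" by (simp add: dual_index_def)
  moreover have "(\<Sum>v\<in>{..m} <+> {..n}. dual_coeff m n None v * x v)
      = (\<Sum>j\<le>n. P n j * x (Inr j)) - (\<Sum>i\<le>m. P m i * x (Inl i))"
    by (simp add: sum_Plus dual_coeff_def sum_negf)
  ultimately show "dd P (Suc m) (Suc n) \<le> (\<Sum>i\<le>m. P m i * x (Inl i)) - (\<Sum>j\<le>n. P n j * x (Inr j))"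
    using feasible by (fastforce simp: dual_bound_def)
qed

lemma dual_certificate_nonneg:
  assumes nonneg: "\<forall>k\<in>dual_index m n. 0 \<le> \<mu> k"
    and balance: "\<forall>v\<in>{..m} <+> {..n}. (\<Sum>k\<in>dual_index m n. \<mu> k * dual_coeff m n k v) = 0"
  shows "0 \<le> (\<Sum>k\<in>dual_index m n. \<mu> k * dual_bound m n k)"
proof -
  define z where "z i j = \<mu> (Some (i, j))" for i j
  have "\<mu> None * dd P (Suc m) (Suc n) \<le> cost m n z"
  proof (rule scaled_plan_cost_ge)
    show "\<forall>i\<le>m. \<forall>j\<le>n. 0 \<le> z i j" "0 \<le> \<mu> None"
      using nonneg by (simp_all add: dual_index_def z_def)
    show "\<forall>i\<le>m. (\<Sum>j\<le>n. z i j) = \<mu> None * P m i"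
    proof (intro allI impI)
      fix i assume "i \<le> m"
      then have "(\<Sum>k\<in>dual_index m n. \<mu> k * dual_coeff m n k (Inl i)) = 0"
        using balance by (simp add: InlI)
      with \<open>i \<le> m\<close> show "(\<Sum>j\<le>n. z i j) = \<mu> None * P m i"
        by (simp add: sum_dual_index sum.swap[where A = "{..m}"] dual_coeff_def z_def
            if_distrib[of "\<lambda>r. _ * r"] cong: if_cong)
    qed
    show "\<forall>j\<le>n. (\<Sum>i\<le>m. z i j) = \<mu> None * P n j"
    proof (intro allI impI)
      fix j assume "j \<le> n"
      then have "(\<Sum>k\<in>dual_index m n. \<mu> k * dual_coeff m n k (Inr j)) = 0"
        using balance by (simp add: InrI)
      with \<open>j \<le> n\<close> show "(\<Sum>i\<le>m. z i j) = \<mu> None * P n j"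
        by (simp add: sum_dual_index dual_coeff_def z_def sum_negf
            if_distrib[of "\<lambda>r. _ * r"] cong: if_cong)
    qed
  qed
  then show ?thesis
    by (simp add: sum_dual_index dual_bound_def z_def cost_def mult.commute)
qed

lemma kantorovich_duality:
  "\<exists>u v. (\<forall>i\<le>m. \<forall>j\<le>n. u i - v j \<le> dd P i j)
      \<and> dd P (Suc m) (Suc n) \<le> (\<Sum>i\<le>m. P m i * u i) - (\<Sum>j\<le>n. P n j * v j)"
proof (rule ccontr)
  assume no_dual: "\<not> ?thesis"
  have "\<forall>x. \<exists>k\<in>dual_index m n. dual_bound m n k < (\<Sum>v\<in>{..m} <+> {..n}. dual_coeff m n k v * x v)"
  proof (rule allI, rule ccontr)
    fix x
    assume "\<not> (\<exists>k\<in>dual_index m n. dual_bound m n k < (\<Sum>v\<in>{..m} <+> {..n}. dual_coeff m n k v * x v))"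
    then have "\<forall>k\<in>dual_index m n. (\<Sum>v\<in>{..m} <+> {..n}. dual_coeff m n k v * x v) \<le> dual_bound m n k"
      by (simp add: not_less)
    from dual_solution[OF this] have "\<exists>u v. (\<forall>i\<le>m. \<forall>j\<le>n. u i - v j \<le> dd P i j)
      \<and> dd P (Suc m) (Suc n) \<le> (\<Sum>i\<le>m. P m i * u i) - (\<Sum>j\<le>n. P n j * v j)"
      by (intro exI[of _ "\<lambda>i. x (Inl i)"] exI[of _ "\<lambda>j. x (Inr j)"])
    with no_dual show False by contradiction
  qed
  from farkas_lemma[OF _ finite_dual_index this] obtain \<mu>
    where "\<forall>k\<in>dual_index m n. 0 \<le> \<mu> k"
      and "\<forall>v\<in>{..m} <+> {..n}. (\<Sum>k\<in>dual_index m n. \<mu> k * dual_coeff m n k v) = 0"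
      and "(\<Sum>k\<in>dual_index m n. \<mu> k * dual_bound m n k) < 0"
    by auto
  with dual_certificate_nonneg show False by fastforce
qed

definition kantorovich_potential :: "nat \<Rightarrow> nat \<Rightarrow> (nat \<Rightarrow> real) \<Rightarrow> bool" where
  "kantorovich_potential m n f \<longleftrightarrow> (\<forall>k l. \<bar>f k - f l\<bar> \<le> dd P k l) \<and> (\<forall>k. 0 \<le> f k \<and> f k \<le> 1)
     \<and> dd P (Suc m) (Suc n) \<le> (\<Sum>i\<le>m. P m i * f i) - (\<Sum>j\<le>n. P n j * f j)"

lemma abs_diff_le_dd_iff: "(\<forall>k l. \<bar>f k - f l\<bar> \<le> dd P k l) \<longleftrightarrow> (\<forall>k l. f k - f l \<le> dd P k l)"
  by (metis abs_le_iff dd_sym minus_diff_eq)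

definition c_transform :: "(nat \<Rightarrow> real) \<Rightarrow> nat \<Rightarrow> nat \<Rightarrow> real" where
  "c_transform v n k = (MIN j\<in>{..n}. v j + dd P k j)"

lemma c_transform_le: "j \<le> n \<Longrightarrow> c_transform v n k \<le> v j + dd P k j"
  unfolding c_transform_def by (intro Min_le) auto

lemma c_transform_attained: "\<exists>j\<le>n. c_transform v n k = v j + dd P k j"
proof -
  have "c_transform v n k \<in> (\<lambda>j. v j + dd P k j) ` {..n}"
    unfolding c_transform_def by (intro Min_in) auto
  then show ?thesis by auto
qed

lemma c_transform_diff_le: "c_transform v n k - c_transform v n l \<le> dd P k l"
proof -
  obtain j where j: "j \<le> n" "c_transform v n l = v j + dd P l j"
    using c_transform_attained by blast
  have "c_transform v n k \<le> v j + dd P k j" using c_transform_le[OF j(1)] .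
  also have "\<dots> \<le> v j + dd P k l + dd P l j" using dd_triangle[of k j l] by simp
  finally show ?thesis using j(2) by simp
qed

lemma c_transform_bounds:
  "(MIN j\<in>{..n}. v j) \<le> c_transform v n k \<and> c_transform v n k \<le> (MIN j\<in>{..n}. v j) + 1"
proof
  obtain j where "j \<le> n" "c_transform v n k = v j + dd P k j"
    using c_transform_attained by blast
  moreover have "(MIN j\<in>{..n}. v j) \<le> v j" using \<open>j \<le> n\<close> by (intro Min_le) auto
  ultimately show "(MIN j\<in>{..n}. v j) \<le> c_transform v n k"
    using dd_nonneg[of k j] by linarith
  have "(MIN j\<in>{..n}. v j) \<in> v ` {..n}" by (intro Min_in) auto
  then obtain j0 where "j0 \<le> n" "(MIN j\<in>{..n}. v j) = v j0" by (metis atMost_iff imageE)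
  then show "c_transform v n k \<le> (MIN j\<in>{..n}. v j) + 1"
    using c_transform_le[of j0 n v k] dd_le_1[of k j0] by simp
qed

text \<open>Replacing \<open>u\<close> by the \<open>c\<close>-transform of \<open>v\<close> can only increase the dual objective.\<close>

lemma ex_kantorovich_potential: "\<exists>f. kantorovich_potential m n f"
proof -
  obtain u v where uv: "\<forall>i\<le>m. \<forall>j\<le>n. u i - v j \<le> dd P i j"
    and dual: "dd P (Suc m) (Suc n) \<le> (\<Sum>i\<le>m. P m i * u i) - (\<Sum>j\<le>n. P n j * v j)"
    using kantorovich_duality by blast
  define g where "g = c_transform v n"
  define f where "f k = g k - (MIN j\<in>{..n}. v j)" for k
  have "(\<Sum>i\<le>m. P m i * u i) \<le> (\<Sum>i\<le>m. P m i * g i)"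
  proof (intro sum_mono mult_left_mono)
    fix i assume "i \<in> {..m}"
    obtain j where "j \<le> n" "g i = v j + dd P i j" using c_transform_attained g_def by blast
    with uv \<open>i \<in> {..m}\<close> show "u i \<le> g i" by force
  qed (simp add: P_nonneg)
  moreover have "(\<Sum>j\<le>n. P n j * g j) \<le> (\<Sum>j\<le>n. P n j * v j)"
  proof (intro sum_mono mult_left_mono)
    fix j assume "j \<in> {..n}"
    then show "g j \<le> v j" using c_transform_le[of j n v j] by (simp add: g_def dd_self)
  qed (simp add: P_nonneg)
  moreover have "(\<Sum>i\<le>m. P m i * f i) - (\<Sum>j\<le>n. P n j * f j)
      = (\<Sum>i\<le>m. P m i * g i) - (\<Sum>j\<le>n. P n j * g j)"
    by (simp add: f_def right_diff_distrib sum_subtractf sum_P flip: sum_distrib_right)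
  moreover have "\<forall>k l. f k - f l \<le> dd P k l"
    using c_transform_diff_le by (simp add: f_def g_def)
  moreover have "0 \<le> f k \<and> f k \<le> 1" for k
    using c_transform_bounds[of v n k] by (simp add: f_def g_def)
  ultimately show ?thesis
    using dual abs_diff_le_dd_iff[of f] unfolding kantorovich_potential_def
    by (intro exI[of _ f]) auto
qed

lemma abs_potential_diff_le_dd:
  assumes "\<And>k l. \<bar>f k - f l\<bar> \<le> dd P k l"
  shows "\<bar>(\<Sum>i\<le>m. P m i * f i) - (\<Sum>j\<le>n. P n j * f j)\<bar> \<le> dd P (Suc m) (Suc n)"
proof (rule le_dd_Suc_SucI)
  fix z assume z: "z \<in> plans P m n"
  have "(\<Sum>i\<le>m. P m i * f i) = (\<Sum>i\<le>m. \<Sum>j\<le>n. z i j * f i)"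
    using z by (simp add: plans_def flip: sum_distrib_right)
  moreover have "(\<Sum>j\<le>n. P n j * f j) = (\<Sum>i\<le>m. \<Sum>j\<le>n. z i j * f j)"
    using z by (subst sum.swap) (simp add: plans_def flip: sum_distrib_right)
  ultimately have "(\<Sum>i\<le>m. P m i * f i) - (\<Sum>j\<le>n. P n j * f j)
      = (\<Sum>i\<le>m. \<Sum>j\<le>n. z i j * (f i - f j))"
    by (simp add: right_diff_distrib sum_subtractf)
  also have "\<bar>\<dots>\<bar> \<le> (\<Sum>i\<le>m. \<Sum>j\<le>n. \<bar>z i j * (f i - f j)\<bar>)"
    by (rule order_trans[OF sum_abs sum_mono[OF sum_abs]])
  also have "\<dots> \<le> cost m n z"
    unfolding cost_def using z assms
    by (intro sum_mono) (auto simp: plans_def abs_mult intro!: mult_left_mono)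
  finally show "\<bar>(\<Sum>i\<le>m. P m i * f i) - (\<Sum>j\<le>n. P n j * f j)\<bar> \<le> cost m n z" .
qed

text \<open>\<open>coordinate (m, n) k\<close> is the \<open>(m, n)\<close>-coordinate of \<open>y\<^sup>k\<close>; the diagonal coordinates
  \<open>1 - d(k-1, n)\<close> realise \<open>R\<^sub>n = \<parallel>x\<^sup>n - y\<^sup>n\<^sup>+\<^sup>1\<parallel>\<close>.\<close>

definition coordinate :: "nat \<times> nat \<Rightarrow> nat \<Rightarrow> real" where
  "coordinate p = (if fst p = snd p then (\<lambda>k. 1 - dd P k (Suc (snd p)))
     else (SOME f. kantorovich_potential (fst p) (snd p) f))"

definition y_seq :: "nat \<Rightarrow> nat \<times> nat \<Rightarrow> real" where
  "y_seq k p = (if p \<in> Iset then coordinate p k else 0)"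

definition x_seq :: "nat \<Rightarrow> nat \<times> nat \<Rightarrow> real" where
  "x_seq n p = (\<Sum>i\<le>n. P n i * y_seq i p)"

definition T_map :: "(nat \<times> nat \<Rightarrow> real) \<Rightarrow> nat \<times> nat \<Rightarrow> real" where
  "T_map u p = (if p \<in> Iset then max 0 (min 1 (mcshane x_seq (\<lambda>n. y_seq (Suc n) p) u)) else 0)"

lemma kantorovich_potential_coordinate: "kantorovich_potential m n (coordinate (m, n))"
proof (cases "m = n")
  case True
  have "\<bar>dd P l (Suc n) - dd P k (Suc n)\<bar> \<le> dd P k l" for k l
    using dd_triangle[of l "Suc n" k] dd_triangle[of k "Suc n" l] dd_sym[of k l] by (simp add: abs_le_iff)
  with True show ?thesis
    by (simp add: kantorovich_potential_def coordinate_def dd_nonneg dd_le_1 dd_self)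
next
  case False
  then show ?thesis
    using someI_ex[OF ex_kantorovich_potential] by (simp add: coordinate_def)
qed

lemma abs_y_seq_diff_le: "\<bar>y_seq k p - y_seq l p\<bar> \<le> dd P k l"
  using kantorovich_potential_coordinate[of "fst p" "snd p"]
  by (simp add: y_seq_def kantorovich_potential_def dd_nonneg)

lemma y_seq_bounds: "0 \<le> y_seq k p \<and> y_seq k p \<le> 1"
  using kantorovich_potential_coordinate[of "fst p" "snd p"]
  by (simp add: y_seq_def kantorovich_potential_def)

lemma y_seq_in_cube: "y_seq k \<in> cube"
proof -
  have "y_seq k p = 0" if "p \<notin> Iset" for p using that by (simp add: y_seq_def)
  with y_seq_bounds show ?thesis by (simp add: cube_def)
qed

lemma x_seq_in_cube: "x_seq n \<in> cube"
proof -
  have "0 \<le> x_seq n p" for p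
    unfolding x_seq_def using y_seq_bounds P_nonneg by (intro sum_nonneg) simp
  moreover have "x_seq n p \<le> 1" for p
  proof -
    have "x_seq n p \<le> (\<Sum>i\<le>n. P n i * 1)"
      unfolding x_seq_def using y_seq_bounds by (intro sum_mono mult_left_mono) (simp_all add: P_nonneg)
    then show ?thesis by (simp add: sum_P)
  qed
  moreover have "x_seq n p = 0" if "p \<notin> Iset" for p using that by (simp add: x_seq_def y_seq_def)
  ultimately show ?thesis by (simp add: cube_def)
qed

lemma linf_dist_x_seq: "linf_dist (x_seq m) (x_seq n) = dd P (Suc m) (Suc n)"
proof (rule antisym)
  show "linf_dist (x_seq m) (x_seq n) \<le> dd P (Suc m) (Suc n)"
    unfolding x_seq_def by (intro linf_dist_le abs_potential_diff_le_dd abs_y_seq_diff_le)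
  have lower: "dd P (Suc m) (Suc n) \<le> linf_dist (x_seq m) (x_seq n)" if "m \<le> n" for m n
  proof -
    have "(m, n) \<in> Iset" using that by (simp add: Iset_def)
    then have "dd P (Suc m) (Suc n) \<le> x_seq m (m, n) - x_seq n (m, n)"
      using kantorovich_potential_coordinate[of m n]
      by (simp add: kantorovich_potential_def x_seq_def y_seq_def)
    also have "\<dots> \<le> linf_dist (x_seq m) (x_seq n)"
      using abs_le_linf_dist[OF x_seq_in_cube[of m] x_seq_in_cube[of n] \<open>(m, n) \<in> Iset\<close>] by simp
    finally show ?thesis .
  qed
  show "dd P (Suc m) (Suc n) \<le> linf_dist (x_seq m) (x_seq n)"
  proof (cases "m \<le> n")
    case False
    then have "dd P (Suc n) (Suc m) \<le> linf_dist (x_seq n) (x_seq m)" by (intro lower) simp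
    then show ?thesis by (simp only: dd_sym[of _ "Suc n"] linf_dist_commute[of "x_seq n"])
  qed (rule lower)
qed

lemma linf_dist_x_seq_y_seq_Suc: "linf_dist (x_seq n) (y_seq (Suc n)) = (\<Sum>i\<le>n. P n i * dd P i (Suc n))"
proof (rule antisym)
  have x_seq_minus: "x_seq n p - y_seq (Suc n) p = (\<Sum>i\<le>n. P n i * (y_seq i p - y_seq (Suc n) p))" for p
    by (simp add: x_seq_def right_diff_distrib sum_subtractf sum_P flip: sum_distrib_right)
  show "linf_dist (x_seq n) (y_seq (Suc n)) \<le> (\<Sum>i\<le>n. P n i * dd P i (Suc n))"
  proof (rule linf_dist_le)
    fix p
    have "\<bar>x_seq n p - y_seq (Suc n) p\<bar> \<le> (\<Sum>i\<le>n. \<bar>P n i * (y_seq i p - y_seq (Suc n) p)\<bar>)"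
      unfolding x_seq_minus by (rule sum_abs)
    also have "\<dots> \<le> (\<Sum>i\<le>n. P n i * dd P i (Suc n))"
      by (intro sum_mono) (simp add: abs_mult P_nonneg abs_y_seq_diff_le mult_left_mono)
    finally show "\<bar>x_seq n p - y_seq (Suc n) p\<bar> \<le> (\<Sum>i\<le>n. P n i * dd P i (Suc n))" .
  qed
  have "(n, n) \<in> Iset" by (simp add: Iset_def)
  then have "y_seq i (n, n) = 1 - dd P i (Suc n)" for i by (simp add: y_seq_def coordinate_def)
  then have "(\<Sum>i\<le>n. P n i * dd P i (Suc n)) = y_seq (Suc n) (n, n) - x_seq n (n, n)"
    by (simp add: x_seq_def dd_self right_diff_distrib sum_subtractf sum_P)
  also have "\<dots> \<le> linf_dist (x_seq n) (y_seq (Suc n))"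
    using abs_le_linf_dist[OF x_seq_in_cube[of n] y_seq_in_cube[of "Suc n"] \<open>(n, n) \<in> Iset\<close>] by simp
  finally show "(\<Sum>i\<le>n. P n i * dd P i (Suc n)) \<le> linf_dist (x_seq n) (y_seq (Suc n))" .
qed

lemma T_map_in_cube: "T_map u \<in> cube"
  by (simp add: cube_def T_map_def)

lemma T_map_nonexpansive:
  assumes "u \<in> cube" "v \<in> cube"
  shows "linf_dist (T_map u) (T_map v) \<le> linf_dist u v"
proof (rule linf_dist_le)
  fix p assume "p \<in> Iset"
  let ?a = "mcshane x_seq (\<lambda>n. y_seq (Suc n) p) u" and ?b = "mcshane x_seq (\<lambda>n. y_seq (Suc n) p) v"
  have "\<bar>?a - ?b\<bar> \<le> linf_dist u v"
    using assms x_seq_in_cube y_seq_bounds by (intro abs_mcshane_diff_le) auto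
  with \<open>p \<in> Iset\<close> show "\<bar>T_map u p - T_map v p\<bar> \<le> linf_dist u v"
    using abs_clamp_diff_le[of ?a ?b] by (simp add: T_map_def)
qed

lemma T_map_x_seq: "T_map (x_seq k) = y_seq (Suc k)"
proof
  fix p
  have "y_seq (Suc k) p \<le> y_seq (Suc n) p + linf_dist (x_seq k) (x_seq n)" for n
    using abs_y_seq_diff_le[of "Suc k" p "Suc n"] by (simp add: linf_dist_x_seq abs_le_iff)
  then have "mcshane x_seq (\<lambda>n. y_seq (Suc n) p) (x_seq k) = y_seq (Suc k) p"
    using x_seq_in_cube y_seq_bounds by (intro mcshane_at) auto
  moreover have "y_seq (Suc k) p = 0" if "p \<notin> Iset" using that by (simp add: y_seq_def)
  ultimately show "T_map (x_seq k) p = y_seq (Suc k) p"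
    using y_seq_bounds[of "Suc k" p] by (simp add: T_map_def)
qed

end

theorem theorem3:
  fixes P :: "nat \<Rightarrow> nat \<Rightarrow> real"
  assumes "is_prob_seq P"
  shows "\<exists>T y0 (x :: nat \<Rightarrow> nat \<times> nat \<Rightarrow> real).
           T ` cube \<subseteq> cube
         \<and> (\<forall>u\<in>cube. \<forall>v\<in>cube. linf_dist (T u) (T v) \<le> linf_dist u v)
         \<and> y0 \<in> cube \<and> (\<forall>n. x n \<in> cube)
         \<and> (\<forall>n\<ge>1. x n = (\<lambda>p. \<Sum>i\<le>n. P n i * (if i = 0 then y0 p else T (x (i - 1)) p)))
         \<and> (\<forall>m n. linf_dist (x m) (x n) = d P (int m) (int n))
         \<and> (condH P \<longrightarrow>
              (\<forall>n. linf_dist (x n) (T (x n)) = (\<Sum>i\<le>n. P n i * d P (int i - 1) (int n))))"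
proof -
  interpret prob_seq P by (fact prob_seq.intro[OF assms])
  have y_seq_eq: "(if i = 0 then y_seq 0 p else T_map (x_seq (i - 1)) p) = y_seq i p" for i p
    by (cases i) (simp_all add: T_map_x_seq)
  have x_seq_eq: "x_seq n = (\<lambda>p. \<Sum>i\<le>n. P n i * (if i = 0 then y_seq 0 p else T_map (x_seq (i - 1)) p))"
    for n by (rule ext) (simp only: y_seq_eq x_seq_def)
  have nat_int_Suc: "nat (int m + 1) = Suc m" for m by simp
  have "d P (int m) (int n) = dd P (Suc m) (Suc n)" "d P (int i - 1) (int n) = dd P i (Suc n)" for i m n
    by (simp_all add: d_def nat_int_Suc)
  then show ?thesis
    using T_map_in_cube T_map_nonexpansive y_seq_in_cube x_seq_in_cube x_seq_eq linf_dist_x_seq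
      linf_dist_x_seq_y_seq_Suc T_map_x_seq
    by (intro exI[of _ T_map] exI[of _ "y_seq 0"] exI[of _ x_seq]) auto
qed

end
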